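(* Let $(R,d)$ be a fusion algebra with a finite generating set $X\subseteq I$. Then $\mathrm{F\o l}^{\mathrm{inn}}_X(R,d)\le1-\frac{1}{\omega_X(R,d)}$, and consequently $\mathrm{F\o l}^{\mathrm{inn}}(R,d)\le1-\frac{1}{\omega(R,d)}$.
   Context: A fusion algebra $(R,d)$ consists of a set $I$ with a distinguished $e$ and involution $\alpha\mapsto\bar\alpha$, a unital ring structure on $R=\mathbb{Z}[I]$ with unit $e$ and $\xi\eta=\sum_\alpha N^\alpha_{\xi,\eta}\alpha$, $N^\alpha_{\xi,\eta}\in\mathbb{Z}_{\ge0}$ finitely many nonzero, the involution extending to a $\mathbb{Z}$-linear antimultiplicative involution, Frobenius reciprocity $N^\alpha_{\xi,\eta}=N^\xi_{\alpha,\bar\eta}=N^\eta_{\bar\xi,\alpha}$, and a $\mathbb{Z}$-linear multiplicative $d:R\to\mathbb{R}$ with $d(\bar\alpha)=d(\alpha)\ge1$ on $I$. $\mathrm{supp}(r)$ is the set of $\alpha\in I$ with nonzero coefficient in $r$; $\alpha\subseteq r$ means $\alpha\in\mathrm{supp}(r)$. $|A|=\sum_{\alpha\in A}d(\alpha)^2$. A finite generating set is a finite $X\subseteq I$ with $\bar X=X$ such that every $\alpha\in I$ satisfies $\alpha\subseteq x_1\cdots x_n$ for some $x_i\in X$. $\ell_X(e)=0$, otherwise $\ell_X(\alpha)$ is the least such $n\ge1$; $B_X(n)=\{\alpha:\ell_X(\alpha)\le n\}$; $\omega_X(R,d)=\lim_n|B_X(n)|^{1/n}$ (exists), $\omega(R,d)=\inf_X\omega_X(R,d)$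 over finite generating sets. The inner boundary is $\partial^{\mathrm{inn}}_X(A)=\{\alpha\in A:\exists x\in X,\ \mathrm{supp}(\alpha x)\not\subseteq A\}$; $\mathrm{F\o l}^{\mathrm{inn}}_X(R,d)=\inf_A|\partial^{\mathrm{inn}}_X(A)|/|A|$ over nonempty finite $A\subseteq I$, and $\mathrm{F\o l}^{\mathrm{inn}}(R,d)=\inf_X\mathrm{F\o l}^{\mathrm{inn}}_X(R,d)$ over finite generating sets. *)

theory Defs
  imports Complex_Main
begin

text \<open>The index set I is the type 'a. Elements of R = Z[I] are represented as
functions 'a => int (finitely supported ones). The structure constants are
N a xi eta = N^a_{xi,eta}.\<close>

definition supp :: "('a \<Rightarrow> int) \<Rightarrow> 'a set" where
  "supp r = {a. r a \<noteq> 0}"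

definition basis :: "'a \<Rightarrow> 'a \<Rightarrow> int" where
  "basis x = (\<lambda>a. if a = x then 1 else 0)"

definition fmult :: "('a \<Rightarrow> 'a \<Rightarrow> 'a \<Rightarrow> nat) \<Rightarrow> ('a \<Rightarrow> int) \<Rightarrow> ('a \<Rightarrow> int) \<Rightarrow> ('a \<Rightarrow> int)" where
  "fmult N r s = (\<lambda>a. \<Sum>xi\<in>supp r. \<Sum>eta\<in>supp s. r xi * s eta * int (N a xi eta))"

definition fusion_algebra ::
  "'a \<Rightarrow> ('a \<Rightarrow> 'a) \<Rightarrow> ('a \<Rightarrow> 'a \<Rightarrow> 'a \<Rightarrow> nat) \<Rightarrow> ('a \<Rightarrow> real) \<Rightarrow> bool" where
  "fusion_algebra e bar N d \<longleftrightarrow>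
     (\<forall>xi eta. finite {a. N a xi eta \<noteq> 0}) \<and>
     (\<forall>xi eta zeta. fmult N (fmult N (basis xi) (basis eta)) (basis zeta)
                   = fmult N (basis xi) (fmult N (basis eta) (basis zeta))) \<and>
     (\<forall>xi. fmult N (basis e) (basis xi) = basis xi \<and> fmult N (basis xi) (basis e) = basis xi) \<and>
     (\<forall>a. bar (bar a) = a) \<and>
     (\<forall>a xi eta. N (bar a) (bar eta) (bar xi) = N a xi eta) \<and>
     (\<forall>a xi eta. N a xi eta = N xi a (bar eta) \<and> N a xi eta = N eta (bar xi) a) \<and>
     (\<forall>xi eta. d xi * d eta = (\<Sum>a\<in>{a. N a xi eta \<noteq> 0}. real (N a xi eta) * d a)) \<and>
     d e = 1 \<and>
     (\<forall>a. d (bar a) = d a \<and> d a \<ge> 1)"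

fun prodl :: "'a \<Rightarrow> ('a \<Rightarrow> 'a \<Rightarrow> 'a \<Rightarrow> nat) \<Rightarrow> 'a list \<Rightarrow> ('a \<Rightarrow> int)" where
  "prodl e N [] = basis e"
| "prodl e N (x # xs) = fmult N (basis x) (prodl e N xs)"

definition fgen_set :: "'a \<Rightarrow> ('a \<Rightarrow> 'a) \<Rightarrow> ('a \<Rightarrow> 'a \<Rightarrow> 'a \<Rightarrow> nat) \<Rightarrow> 'a set \<Rightarrow> bool" where
  "fgen_set e bar N X \<longleftrightarrow> finite X \<and> bar ` X = X \<and>
     (\<forall>a. \<exists>xs. xs \<noteq> [] \<and> set xs \<subseteq> X \<and> a \<in> supp (prodl e N xs))"

definition word_len :: "'a \<Rightarrow> ('a \<Rightarrow> 'a \<Rightarrow> 'a \<Rightarrow> nat) \<Rightarrow> 'a set \<Rightarrow> 'a \<Rightarrow> nat" where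
  "word_len e N X a = (if a = e then 0 else
     (LEAST n. n \<ge> 1 \<and> (\<exists>xs. length xs = n \<and> set xs \<subseteq> X \<and> a \<in> supp (prodl e N xs))))"

definition ball_X :: "'a \<Rightarrow> ('a \<Rightarrow> 'a \<Rightarrow> 'a \<Rightarrow> nat) \<Rightarrow> 'a set \<Rightarrow> nat \<Rightarrow> 'a set" where
  "ball_X e N X n = {a. word_len e N X a \<le> n}"

definition dsize :: "('a \<Rightarrow> real) \<Rightarrow> 'a set \<Rightarrow> real" where
  "dsize d A = (\<Sum>a\<in>A. (d a)^2)"

definition growth_X :: "'a \<Rightarrow> ('a \<Rightarrow> 'a \<Rightarrow> 'a \<Rightarrow> nat) \<Rightarrow> ('a \<Rightarrow> real) \<Rightarrow> 'a set \<Rightarrow> real" where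
  "growth_X e N d X = lim (\<lambda>n. root n (dsize d (ball_X e N X n)))"

definition growth :: "'a \<Rightarrow> ('a \<Rightarrow> 'a) \<Rightarrow> ('a \<Rightarrow> 'a \<Rightarrow> 'a \<Rightarrow> nat) \<Rightarrow> ('a \<Rightarrow> real) \<Rightarrow> real" where
  "growth e bar N d = Inf {growth_X e N d X | X. fgen_set e bar N X}"

definition inner_boundary :: "('a \<Rightarrow> 'a \<Rightarrow> 'a \<Rightarrow> nat) \<Rightarrow> 'a set \<Rightarrow> 'a set \<Rightarrow> 'a set" where
  "inner_boundary N X A = {a\<in>A. \<exists>x\<in>X. \<not> supp (fmult N (basis a) (basis x)) \<subseteq> A}"

definition folner_inn_X :: "('a \<Rightarrow> 'a \<Rightarrow> 'a \<Rightarrow> nat) \<Rightarrow> ('a \<Rightarrow> real) \<Rightarrow> 'a set \<Rightarrow> real" where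
  "folner_inn_X N d X = Inf {dsize d (inner_boundary N X A) / dsize d A | A. finite A \<and> A \<noteq> {}}"

definition folner_inn :: "'a \<Rightarrow> ('a \<Rightarrow> 'a) \<Rightarrow> ('a \<Rightarrow> 'a \<Rightarrow> 'a \<Rightarrow> nat) \<Rightarrow> ('a \<Rightarrow> real) \<Rightarrow> real" where
  "folner_inn e bar N d = Inf {folner_inn_X N d X | X. fgen_set e bar N X}"

end

theory Submission
  imports Defs
begin

(* Let B(n) be the ball of radius n for the word length of X. Since |supp(a b)| <= (d(a) d(b))^2,
   the sizes |B(n)| are submultiplicative and at least 1, so by Fekete's lemma |B(n)|^(1/n)
   converges to omega_X. Multiplying an element of B(n) by a generator on the right stays in B(n+1),
   so the inner boundary of B(n+1) lies in B(n+1) - B(n) and Fol_X <= 1 - |B(n)|/|B(n+1)|.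
   Iterating gives |B(n)| >= (1 - Fol_X)^(-n), and taking n-th roots, 1/(1 - Fol_X) <= omega_X.
   The second inequality follows by taking infima over X, as t -> 1 - 1/t is increasing and
   continuous. *)

lemma sum_UN_le:
  fixes f :: "'b \<Rightarrow> 'c::ordered_ab_group_add"
  assumes "finite I" "\<And>i. i \<in> I \<Longrightarrow> finite (A i)" "\<And>x. 0 \<le> f x"
  shows "sum f (\<Union>i\<in>I. A i) \<le> (\<Sum>i\<in>I. sum f (A i))"
  using assms(1,2)
proof (induction I rule: finite_induct)
  case (insert i I)
  have "sum f (A i \<union> (\<Union>j\<in>I. A j)) \<le> sum f (A i) + sum f (\<Union>j\<in>I. A j)"
    using insert assms(3) by (simp add: sum_Un sum_nonneg)
  also have "\<dots> \<le> sum f (A i) + (\<Sum>j\<in>I. sum f (A j))"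
    using insert by (intro add_left_mono) auto
  finally show ?case using insert by simp
qed simp

lemma subadditive_mult_add_le:
  fixes a :: "nat \<Rightarrow> real"
  assumes "\<And>m n. a (m + n) \<le> a m + a n"
  shows "a (q * m + r) \<le> q * a m + a r"
proof (induction q)
  case (Suc q)
  have "a (m + (q * m + r)) \<le> a m + (q * a m + a r)"
    using assms[of m "q * m + r"] Suc by linarith
  then show ?case by (simp add: algebra_simps)
qed simp

lemma subadditive_div_le:
  fixes a :: "nat \<Rightarrow> real"
  assumes sub: "\<And>m n. a (m + n) \<le> a m + a n" and nonneg: "\<And>n. 0 \<le> a n"
    and "0 < m" "0 < n"
  shows "a n / n \<le> a m / m + (\<Sum>k<m. a k) / n"
proof -
  have "a n = a (n div m * m + n mod m)"
    by simp
  also have "\<dots> \<le> (n div m) * a m + a (n mod m)"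
    by (rule subadditive_mult_add_le[of a, OF sub])
  also have "real (n div m) * a m \<le> n / m * a m"
  proof (intro mult_right_mono)
    have "real (n div m) * m \<le> n"
      by (metis of_nat_le_iff of_nat_mult div_times_less_eq_dividend)
    then show "real (n div m) \<le> n / m"
      using \<open>0 < m\<close> by (simp add: le_divide_eq)
  qed (rule nonneg)
  also have "a (n mod m) \<le> (\<Sum>k<m. a k)"
    using nonneg \<open>0 < m\<close> by (intro member_le_sum) simp_all
  finally have "a n / n \<le> (n / m * a m + (\<Sum>k<m. a k)) / n"
    by (simp add: divide_right_mono)
  also have "\<dots> = a m / m + (\<Sum>k<m. a k) / n"
    using \<open>0 < n\<close> by (simp add: add_divide_distrib)
  finally show ?thesis .
qed

lemma Fekete_subadditive:
  fixes a :: "nat \<Rightarrow> real"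
  assumes sub: "\<And>m n. a (m + n) \<le> a m + a n" and nonneg: "\<And>n. 0 \<le> a n"
  shows "(\<lambda>n. a n / n) \<longlonglongrightarrow> Inf ((\<lambda>n. a n / n) ` {0<..})"
proof -
  define L where "L = Inf ((\<lambda>n. a n / n) ` {0<..})"
  have bdd: "bdd_below ((\<lambda>n. a n / n) ` {0<..})"
    using nonneg by (intro bdd_belowI[of _ 0]) auto
  have "(\<lambda>n. a n / n) \<longlonglongrightarrow> L"
  proof (rule order_tendstoI)
    fix y
    assume "y < L"
    show "\<forall>\<^sub>F n in sequentially. y < a n / n"
      using eventually_gt_at_top[of 0]
    proof eventually_elim
      case (elim n)
      then have "L \<le> a n / n"
        unfolding L_def by (intro cInf_lower[OF _ bdd]) auto
      with \<open>y < L\<close> show ?case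
        by simp
    qed
  next
    fix y
    assume "L < y"
    then obtain m where m: "0 < m" "a m / m < y"
      unfolding L_def by (subst (asm) cInf_less_iff[OF _ bdd]) auto
    have "(\<lambda>n. (\<Sum>k<m. a k) / real n) \<longlonglongrightarrow> 0"
      by (rule lim_const_over_n)
    then have "\<forall>\<^sub>F n in sequentially. (\<Sum>k<m. a k) / n < y - a m / m"
      using m(2) order_tendstoD(2)[of _ 0 sequentially "y - a m / m"] by simp
    then show "\<forall>\<^sub>F n in sequentially. a n / n < y"
      using eventually_gt_at_top[of 0]
    proof eventually_elim
      case (elim n)
      then show ?case
        using subadditive_div_le[of a, OF sub nonneg \<open>0 < m\<close>, of n] by linarith
    qed
  qed
  then show ?thesis
    unfolding L_def .
qed

lemma submultiplicative_root_convergent: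
  fixes b :: "nat \<Rightarrow> real"
  assumes ge1: "\<And>n. 1 \<le> b n" and sub: "\<And>m n. b (m + n) \<le> b m * b n"
  shows "convergent (\<lambda>n. root n (b n))"
proof -
  have pos: "0 < b n" for n
    using ge1[of n] by simp
  have "ln (b (m + n)) \<le> ln (b m) + ln (b n)" for m n
  proof -
    have "ln (b (m + n)) \<le> ln (b m * b n)"
      using sub[of m n] pos by simp
    then show ?thesis
      using pos[of m] pos[of n] by (auto simp: ln_mult)
  qed
  moreover have "0 \<le> ln (b n)" for n
    using ge1[of n] by simp
  ultimately have "(\<lambda>n. exp (ln (b n) / n)) \<longlonglongrightarrow> exp (Inf ((\<lambda>n. ln (b n) / n) ` {0<..}))"
    by (rule tendsto_exp[OF Fekete_subadditive])
  moreover have "\<forall>\<^sub>F n in sequentially. exp (ln (b n) / n) = root n (b n)"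
    using eventually_gt_at_top[of 0]
  proof eventually_elim
    case (elim n)
    then show ?case
      using pos[of n] by (simp add: root_powr_inverse powr_def)
  qed
  ultimately have "(\<lambda>n. root n (b n)) \<longlonglongrightarrow> exp (Inf ((\<lambda>n. ln (b n) / n) ` {0<..}))"
    by (rule Lim_transform_eventually)
  then show ?thesis
    by (rule convergentI)
qed

lemma one_le_mult_lim_root:
  fixes b :: "nat \<Rightarrow> real"
  assumes "b 0 = 1" and pos: "\<And>n. 0 < b n" and step: "\<And>n. b n \<le> q * b (Suc n)"
    and lim: "(\<lambda>n. root n (b n)) \<longlonglongrightarrow> w"
  shows "1 \<le> q * w"
proof -
  have "1 \<le> q * b (Suc 0)"
    using step[of 0] \<open>b 0 = 1\<close> by simp
  then have "0 < q"
    using pos[of "Suc 0"] by (smt (verit) mult_nonpos_nonneg)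
  have pow: "1 \<le> q ^ n * b n" for n
  proof (induction n)
    case (Suc n)
    have "q ^ n * b n \<le> q ^ n * (q * b (Suc n))"
      using step[of n] \<open>0 < q\<close> by (simp add: mult_left_mono)
    with Suc show ?case by (simp add: algebra_simps)
  qed (simp add: \<open>b 0 = 1\<close>)
  have "(\<lambda>n. q * root n (b n)) \<longlonglongrightarrow> q * w"
    by (intro tendsto_mult_left lim)
  moreover have "1 \<le> q * root n (b n)" if "0 < n" for n
  proof -
    have "1 \<le> root n (q ^ n * b n)"
      using pow[of n] that by simp
    also have "\<dots> = q * root n (b n)"
      using that \<open>0 < q\<close> by (simp add: real_root_mult real_root_pos2)
    finally show ?thesis .
  qed
  ultimately show ?thesis
    by (intro LIMSEQ_le_const) (auto intro!: exI[of _ 1])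
qed

lemma Inf_le_one_minus_inverse_Inf:
  fixes F w :: "'b \<Rightarrow> real"
  assumes "S \<noteq> {}" and "\<And>y. y \<in> S \<Longrightarrow> 0 \<le> F y" and "\<And>y. y \<in> S \<Longrightarrow> 1 \<le> w y"
    and "\<And>y. y \<in> S \<Longrightarrow> F y \<le> 1 - 1 / w y"
  shows "Inf (F ` S) \<le> 1 - 1 / Inf (w ` S)"
proof -
  define t where "t = Inf (F ` S)"
  have "bdd_below (F ` S)"
    using assms(2) by (intro bdd_belowI[of _ 0]) auto
  then have t_le: "t \<le> 1 - 1 / w y" if "y \<in> S" for y
    unfolding t_def using assms(4) that by (intro order.trans[OF cInf_lower]) auto
  obtain y where "y \<in> S"
    using assms(1) by blast
  then have "t < 1"
    using t_le[of y] assms(3)[of y] by (smt (verit) divide_pos_pos)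
  have "1 / (1 - t) \<le> w y" if "y \<in> S" for y
    using t_le[OF that] assms(3)[OF that] \<open>t < 1\<close> by (simp add: field_simps)
  then have "1 / (1 - t) \<le> Inf (w ` S)"
    using assms(1) by (intro cInf_greatest) auto
  moreover have "0 < 1 / (1 - t)"
    using \<open>t < 1\<close> by simp
  ultimately have "inverse (Inf (w ` S)) \<le> inverse (1 / (1 - t))"
    by (intro le_imp_inverse_le)
  then show ?thesis
    unfolding t_def[symmetric] by (simp add: inverse_eq_divide)
qed

definition supp_mult :: "('a \<Rightarrow> 'a \<Rightarrow> 'a \<Rightarrow> nat) \<Rightarrow> 'a \<Rightarrow> 'a \<Rightarrow> 'a set" where
  "supp_mult N x y = {a. N a x y \<noteq> 0}"

lemma supp_basis [simp]: "supp (basis x) = {x}"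
  by (auto simp: supp_def basis_def)

lemma basis_nonneg: "0 \<le> basis x a"
  by (simp add: basis_def)

lemma fmult_basis_basis: "fmult N (basis x) (basis y) = (\<lambda>a. int (N a x y))"
  unfolding fmult_def supp_basis by (simp add: basis_def)

lemma supp_fmult_basis [simp]: "supp (fmult N (basis x) (basis y)) = supp_mult N x y"
  by (simp add: fmult_basis_basis supp_def supp_mult_def)

lemma fmult_nonneg:
  assumes "\<And>a. 0 \<le> r a" and "\<And>a. 0 \<le> s a"
  shows "0 \<le> fmult N r s a"
  unfolding fmult_def using assms by (intro sum_nonneg mult_nonneg_nonneg) auto

lemma supp_fmult_subset:
  "supp (fmult N r s) \<subseteq> (\<Union>xi\<in>supp r. \<Union>eta\<in>supp s. supp_mult N xi eta)"
proof
  fix a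
  assume "a \<in> supp (fmult N r s)"
  then obtain xi where "xi \<in> supp r" and "(\<Sum>eta\<in>supp s. r xi * s eta * int (N a xi eta)) \<noteq> 0"
    unfolding supp_def fmult_def by (auto elim: sum.not_neutral_contains_not_neutral)
  moreover from this(2) obtain eta where "eta \<in> supp s" and "r xi * s eta * int (N a xi eta) \<noteq> 0"
    by (auto elim: sum.not_neutral_contains_not_neutral)
  ultimately show "a \<in> (\<Union>xi\<in>supp r. \<Union>eta\<in>supp s. supp_mult N xi eta)"
    by (auto simp: supp_mult_def)
qed

lemma supp_fmult:
  assumes "finite (supp r)" "finite (supp s)" "\<And>a. 0 \<le> r a" "\<And>a. 0 \<le> s a"
  shows "supp (fmult N r s) = (\<Union>xi\<in>supp r. \<Union>eta\<in>supp s. supp_mult N xi eta)"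
proof (intro equalityI supp_fmult_subset subsetI)
  fix a
  assume "a \<in> (\<Union>xi\<in>supp r. \<Union>eta\<in>supp s. supp_mult N xi eta)"
  then obtain xi eta where xi: "xi \<in> supp r" and eta: "eta \<in> supp s" and "N a xi eta \<noteq> 0"
    by (auto simp: supp_mult_def)
  then have "0 < r xi * s eta * int (N a xi eta)"
    using assms(3,4) by (auto simp: supp_def intro!: mult_pos_pos order.not_eq_order_implies_strict)
  then have "0 < (\<Sum>eta\<in>supp s. r xi * s eta * int (N a xi eta))"
    using assms by (intro sum_pos2[OF assms(2) eta]) auto
  then have "0 < (\<Sum>xi\<in>supp r. \<Sum>eta\<in>supp s. r xi * s eta * int (N a xi eta))"
    using assms by (intro sum_pos2[OF assms(1) xi]) (auto intro!: sum_nonneg)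
  then show "a \<in> supp (fmult N r s)"
    by (simp add: supp_def fmult_def)
qed

lemma word_len_le_length:
  assumes "set ys \<subseteq> X" and "a \<in> supp (prodl e N ys)"
  shows "word_len e N X a \<le> length ys"
proof (cases "a = e")
  case False
  with assms(2) have "ys \<noteq> []"
    by auto
  with assms have
    "(LEAST n. 1 \<le> n \<and> (\<exists>xs. length xs = n \<and> set xs \<subseteq> X \<and> a \<in> supp (prodl e N xs)))
      \<le> length ys"
    by (intro Least_le) (auto simp: Suc_le_eq)
  with False show ?thesis
    by (simp add: word_len_def)
qed (simp add: word_len_def)

lemma ball_X_mono: "m \<le> n \<Longrightarrow> ball_X e N X m \<subseteq> ball_X e N X n"
  by (auto simp: ball_X_def)

lemma dsize_nonneg: "0 \<le> dsize d A"
  by (simp add: dsize_def sum_nonneg)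

lemma dsize_Diff: "finite B \<Longrightarrow> A \<subseteq> B \<Longrightarrow> dsize d (B - A) = dsize d B - dsize d A"
  by (simp add: dsize_def sum_diff finite_subset)

lemma folner_inn_X_le:
  assumes "finite A" and "A \<noteq> {}"
  shows "folner_inn_X N d X \<le> dsize d (inner_boundary N X A) / dsize d A"
  unfolding folner_inn_X_def using assms
  by (intro cInf_lower bdd_belowI[of _ 0]) (auto simp: dsize_nonneg)

lemma folner_inn_X_nonneg: "0 \<le> folner_inn_X N d X"
  unfolding folner_inn_X_def by (intro cInf_greatest) (auto simp: dsize_nonneg)

locale fusion_alg =
  fixes e :: 'a and bar :: "'a \<Rightarrow> 'a" and N :: "'a \<Rightarrow> 'a \<Rightarrow> 'a \<Rightarrow> nat" and d :: "'a \<Rightarrow> real"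
  assumes fusion: "fusion_algebra e bar N d"
begin

lemma finite_supp_mult: "finite (supp_mult N x y)"
  using fusion by (simp add: fusion_algebra_def supp_mult_def)

lemma supp_mult_assoc:
  "(\<Union>a\<in>supp_mult N x y. supp_mult N a z) = (\<Union>b\<in>supp_mult N y z. supp_mult N x b)"
proof -
  have "supp (fmult N (fmult N (basis x) (basis y)) (basis z))
      = supp (fmult N (basis x) (fmult N (basis y) (basis z)))"
    using fusion by (simp add: fusion_algebra_def)
  then show ?thesis
    by (subst (asm) (1 2) supp_fmult) (simp_all add: finite_supp_mult basis_nonneg fmult_nonneg)
qed

lemma supp_mult_unit_left: "supp_mult N e x = {x}"
  using fusion supp_fmult_basis[of N e x] by (simp add: fusion_algebra_def)

lemma supp_mult_unit_right: "supp_mult N x e = {x}"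
  using fusion supp_fmult_basis[of N x e] by (simp add: fusion_algebra_def)

lemma prodl_nonneg: "0 \<le> prodl e N xs a"
  by (induction xs arbitrary: a) (simp_all add: basis_nonneg fmult_nonneg)

lemma finite_supp_prodl: "finite (supp (prodl e N xs))"
proof (induction xs)
  case (Cons x xs)
  then show ?case
    using supp_fmult_subset[of N "basis x" "prodl e N xs"]
    by (auto intro: finite_subset simp: finite_supp_mult)
qed simp

lemma supp_prodl_Cons: "supp (prodl e N (x # xs)) = (\<Union>b\<in>supp (prodl e N xs). supp_mult N x b)"
  by (simp add: supp_fmult finite_supp_prodl basis_nonneg prodl_nonneg)

lemma supp_prodl_append:
  "supp (prodl e N (ys @ zs)) = (\<Union>a\<in>supp (prodl e N ys). \<Union>b\<in>supp (prodl e N zs). supp_mult N a b)"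
proof (induction ys)
  case Nil
  then show ?case
    by (simp add: supp_mult_unit_left)
next
  case (Cons y ys)
  have "supp (prodl e N ((y # ys) @ zs))
      = (\<Union>a\<in>supp (prodl e N ys). \<Union>b\<in>supp (prodl e N zs). \<Union>c\<in>supp_mult N a b. supp_mult N y c)"
    unfolding append_Cons supp_prodl_Cons Cons.IH by blast
  also have "\<dots> = (\<Union>a\<in>supp (prodl e N ys). \<Union>b\<in>supp (prodl e N zs).
      \<Union>c\<in>supp_mult N y a. supp_mult N c b)"
    by (simp add: supp_mult_assoc)
  also have "\<dots> = (\<Union>c\<in>supp (prodl e N (y # ys)). \<Union>b\<in>supp (prodl e N zs). supp_mult N c b)"
    unfolding supp_prodl_Cons by blast
  finally show ?case .
qed

lemma one_le_dim: "1 \<le> d a"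
  using fusion by (simp add: fusion_algebra_def)

lemma dim_nonneg: "0 \<le> d a"
  using one_le_dim[of a] by simp

lemma dim_unit: "d e = 1"
  using fusion by (simp add: fusion_algebra_def)

lemma sum_dim_supp_mult_le: "(\<Sum>a\<in>supp_mult N x y. d a) \<le> d x * d y"
proof -
  have "(\<Sum>a\<in>supp_mult N x y. d a) \<le> (\<Sum>a\<in>supp_mult N x y. real (N a x y) * d a)"
  proof (intro sum_mono)
    fix a
    assume "a \<in> supp_mult N x y"
    then have "1 \<le> real (N a x y)"
      by (simp add: supp_mult_def)
    then show "d a \<le> real (N a x y) * d a"
      using one_le_dim[of a] by (simp add: mult_le_cancel_right1)
  qed
  also have "\<dots> = d x * d y"
    using fusion by (simp add: fusion_algebra_def supp_mult_def)
  finally show ?thesis .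
qed

lemma dsize_supp_mult_le: "dsize d (supp_mult N x y) \<le> (d x * d y)\<^sup>2"
proof -
  have "dsize d (supp_mult N x y) \<le> (\<Sum>a\<in>supp_mult N x y. d a * (d x * d y))"
    unfolding dsize_def power2_eq_square
  proof (intro sum_mono mult_left_mono)
    fix a
    assume "a \<in> supp_mult N x y"
    then have "d a \<le> (\<Sum>a\<in>supp_mult N x y. d a)"
      by (intro member_le_sum) (simp_all add: dim_nonneg finite_supp_mult)
    then show "d a \<le> d x * d y"
      using sum_dim_supp_mult_le by (rule order.trans)
  qed (rule dim_nonneg)
  also have "\<dots> \<le> d x * d y * (d x * d y)"
    unfolding sum_distrib_right[symmetric]
    by (intro mult_right_mono[OF sum_dim_supp_mult_le]) (simp add: dim_nonneg)
  finally show ?thesis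
    by (simp add: power2_eq_square)
qed

end

locale fusion_alg_gen = fusion_alg +
  fixes X :: "'a set"
  assumes generating: "fgen_set e bar N X"
begin

lemma word_len_witness:
  "\<exists>ys. set ys \<subseteq> X \<and> length ys = word_len e N X a \<and> a \<in> supp (prodl e N ys)"
proof (cases "a = e")
  case True
  then show ?thesis
    by (intro exI[of _ "[]"]) (simp add: word_len_def)
next
  case False
  let ?P = "\<lambda>n. 1 \<le> n \<and> (\<exists>xs. length xs = n \<and> set xs \<subseteq> X \<and> a \<in> supp (prodl e N xs))"
  obtain xs where "xs \<noteq> []" "set xs \<subseteq> X" "a \<in> supp (prodl e N xs)"
    using generating unfolding fgen_set_def by blast
  then have "?P (length xs)"
    by (auto simp: Suc_le_eq)
  then have "?P (Least ?P)"
    by (rule LeastI)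
  with False show ?thesis
    by (auto simp: word_len_def)
qed

lemma mem_ball_X_iff:
  "a \<in> ball_X e N X n \<longleftrightarrow> (\<exists>ys. set ys \<subseteq> X \<and> length ys \<le> n \<and> a \<in> supp (prodl e N ys))"
  using word_len_witness[of a] word_len_le_length[of _ X a e N]
  by (auto simp: ball_X_def intro: order.trans)

lemma finite_ball_X: "finite (ball_X e N X n)"
proof -
  have "ball_X e N X n = (\<Union>ys\<in>{ys. set ys \<subseteq> X \<and> length ys \<le> n}. supp (prodl e N ys))"
    using mem_ball_X_iff by blast
  moreover have "finite X"
    using generating by (simp add: fgen_set_def)
  ultimately show ?thesis
    by (simp add: finite_lists_length_le finite_supp_prodl)
qed

lemma unit_mem_ball_X: "e \<in> ball_X e N X n"
  by (simp add: ball_X_def word_len_def)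

lemma ball_X_0: "ball_X e N X 0 = {e}"
  using mem_ball_X_iff[of _ 0] by auto

lemma ball_X_add_subset:
  "ball_X e N X (m + n) \<subseteq> (\<Union>a\<in>ball_X e N X m. \<Union>b\<in>ball_X e N X n. supp_mult N a b)"
proof
  fix c
  assume "c \<in> ball_X e N X (m + n)"
  then obtain ys where ys: "set ys \<subseteq> X" "length ys \<le> m + n" "c \<in> supp (prodl e N ys)"
    using mem_ball_X_iff by blast
  then obtain a b where a: "a \<in> supp (prodl e N (take m ys))"
    and b: "b \<in> supp (prodl e N (drop m ys))" and "c \<in> supp_mult N a b"
    using supp_prodl_append[of "take m ys" "drop m ys", unfolded append_take_drop_id] by blast
  moreover have "a \<in> ball_X e N X m"
    unfolding mem_ball_X_iff using a ys(1) by (intro exI[of _ "take m ys"]) (auto dest: in_set_takeD)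
  moreover have "b \<in> ball_X e N X n"
    unfolding mem_ball_X_iff using b ys(1,2) by (intro exI[of _ "drop m ys"]) (auto dest: in_set_dropD)
  ultimately show "c \<in> (\<Union>a\<in>ball_X e N X m. \<Union>b\<in>ball_X e N X n. supp_mult N a b)"
    by blast
qed

lemma dsize_ball_X_add_le:
  "dsize d (ball_X e N X (m + n)) \<le> dsize d (ball_X e N X m) * dsize d (ball_X e N X n)"
proof -
  let ?f = "\<lambda>a. (d a)\<^sup>2" and ?Bm = "ball_X e N X m" and ?Bn = "ball_X e N X n"
  have "dsize d (ball_X e N X (m + n)) \<le> sum ?f (\<Union>a\<in>?Bm. \<Union>b\<in>?Bn. supp_mult N a b)"
    unfolding dsize_def
    by (rule sum_mono2[OF _ ball_X_add_subset]) (auto simp: finite_ball_X finite_supp_mult)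
  also have "\<dots> \<le> (\<Sum>a\<in>?Bm. \<Sum>b\<in>?Bn. sum ?f (supp_mult N a b))"
    by (intro order.trans[OF sum_UN_le] sum_mono sum_UN_le)
      (auto simp: finite_ball_X finite_supp_mult)
  also have "\<dots> \<le> (\<Sum>a\<in>?Bm. \<Sum>b\<in>?Bn. (d a * d b)\<^sup>2)"
    using dsize_supp_mult_le by (intro sum_mono) (simp add: dsize_def)
  also have "\<dots> = dsize d ?Bm * dsize d ?Bn"
    by (simp add: dsize_def sum_product power_mult_distrib)
  finally show ?thesis .
qed

lemma dsize_ball_X_0: "dsize d (ball_X e N X 0) = 1"
  by (simp add: ball_X_0 dsize_def dim_unit)

lemma one_le_dsize_ball_X: "1 \<le> dsize d (ball_X e N X n)"
proof -
  have "(d e)\<^sup>2 \<le> dsize d (ball_X e N X n)"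
    unfolding dsize_def by (intro member_le_sum) (simp_all add: unit_mem_ball_X finite_ball_X)
  then show ?thesis
    by (simp add: dim_unit)
qed

lemma inner_boundary_ball_X_subset:
  "inner_boundary N X (ball_X e N X (Suc n)) \<subseteq> ball_X e N X (Suc n) - ball_X e N X n"
proof (intro subsetI DiffI)
  fix a
  assume a: "a \<in> inner_boundary N X (ball_X e N X (Suc n))"
  then show "a \<in> ball_X e N X (Suc n)"
    by (simp add: inner_boundary_def)
  show "a \<notin> ball_X e N X n"
  proof
    assume "a \<in> ball_X e N X n"
    then obtain ys where ys: "set ys \<subseteq> X" "length ys \<le> n" "a \<in> supp (prodl e N ys)"
      using mem_ball_X_iff by blast
    have "supp_mult N a x \<subseteq> ball_X e N X (Suc n)" if "x \<in> X" for x
    proof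
      fix c
      assume "c \<in> supp_mult N a x"
      then have "c \<in> supp (prodl e N (ys @ [x]))"
        using ys(3) by (auto simp: supp_prodl_append supp_mult_unit_right)
      then show "c \<in> ball_X e N X (Suc n)"
        using ys that by (auto simp: mem_ball_X_iff intro!: exI[of _ "ys @ [x]"])
    qed
    with a show False
      by (auto simp: inner_boundary_def)
  qed
qed

lemma dsize_ball_X_le_folner:
  "dsize d (ball_X e N X n) \<le> (1 - folner_inn_X N d X) * dsize d (ball_X e N X (Suc n))"
proof -
  let ?B = "ball_X e N X (Suc n)" and ?B' = "ball_X e N X n"
  have pos: "0 < dsize d ?B"
    using one_le_dsize_ball_X[of "Suc n"] by simp
  have "folner_inn_X N d X \<le> dsize d (inner_boundary N X ?B) / dsize d ?B"
    using unit_mem_ball_X by (intro folner_inn_X_le finite_ball_X) blast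
  also have "\<dots> \<le> dsize d (?B - ?B') / dsize d ?B"
    unfolding dsize_def using pos
    by (intro divide_right_mono sum_mono2 inner_boundary_ball_X_subset)
      (simp_all add: finite_ball_X sum_nonneg)
  also have "\<dots> = 1 - dsize d ?B' / dsize d ?B"
    using pos by (simp add: dsize_Diff[OF finite_ball_X ball_X_mono] diff_divide_distrib)
  finally show ?thesis
    using pos by (simp add: field_simps)
qed

lemma growth_X_LIMSEQ: "(\<lambda>n. root n (dsize d (ball_X e N X n))) \<longlonglongrightarrow> growth_X e N d X"
  using submultiplicative_root_convergent[of "\<lambda>n. dsize d (ball_X e N X n)"]
    one_le_dsize_ball_X dsize_ball_X_add_le
  by (simp add: growth_X_def convergent_LIMSEQ_iff)

lemma one_le_growth_X: "1 \<le> growth_X e N d X"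
  using one_le_dsize_ball_X
  by (intro LIMSEQ_le_const[OF growth_X_LIMSEQ]) (auto intro!: exI[of _ 1])

lemma folner_inn_X_le_growth_X: "folner_inn_X N d X \<le> 1 - 1 / growth_X e N d X"
proof -
  have "1 \<le> (1 - folner_inn_X N d X) * growth_X e N d X"
    using dsize_ball_X_0 dsize_ball_X_le_folner growth_X_LIMSEQ
    by (intro one_le_mult_lim_root[of "\<lambda>n. dsize d (ball_X e N X n)"])
      (auto intro: less_le_trans[OF zero_less_one one_le_dsize_ball_X])
  then show ?thesis
    using one_le_growth_X by (simp add: field_simps)
qed

end

theorem proposition3p17:
  fixes e :: 'a and bar :: "'a \<Rightarrow> 'a" and N :: "'a \<Rightarrow> 'a \<Rightarrow> 'a \<Rightarrow> nat"
    and d :: "'a \<Rightarrow> real" and X :: "'a set"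
  assumes "fusion_algebra e bar N d"
    and "fgen_set e bar N X"
  shows "folner_inn_X N d X \<le> 1 - 1 / growth_X e N d X
         \<and> folner_inn e bar N d \<le> 1 - 1 / growth e bar N d"
proof -
  have gen: "fusion_alg_gen e bar N d Y" if "fgen_set e bar N Y" for Y
    using assms(1) that by (simp add: fusion_alg_gen_def fusion_alg_def fusion_alg_gen_axioms_def)
  have "folner_inn e bar N d \<le> 1 - 1 / growth e bar N d"
    unfolding folner_inn_def growth_def setcompr_eq_image
    using assms(2) folner_inn_X_nonneg fusion_alg_gen.one_le_growth_X[OF gen]
      fusion_alg_gen.folner_inn_X_le_growth_X[OF gen]
    by (intro Inf_le_one_minus_inverse_Inf) auto
  then show ?thesis
    using fusion_alg_gen.folner_inn_X_le_growth_X[OF gen[OF assms(2)]] by blast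
qed

end
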